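(* Let $X$ be a nonempty open bounded subset of $\mathbb{R}^n$. For every $f\in C_{ae}(X,\mathbb{R})$ there is a unique lower semicontinuous quasicontinuous function $f^-$ belonging to the class $f$ and a unique upper semicontinuous quasicontinuous function $f^+$ belonging to the class $f$; the pair $(f^-,f^+)$ is characterized as the pair of representatives of $f$ satisfying $(f^-)^*=f^+$ and $(f^+)_*=f^-$; moreover $\int_X f^+(x)\,dx=\int_X f^-(x)\,dx$.
   Context: $C_{ae}(X,\mathbb{R})$ is the set of equivalence classes of bounded functions $X\to\mathbb{R}$ continuous at almost every point, modulo equality almost everywhere. A function $\phi:X\to\mathbb{R}$ is quasicontinuous if for every $x\in X$ and $\varepsilon>0$ there is an open set $\mathcal{U}\subset X$ with $x\in\mathrm{cl}\,\mathcal{U}$ and $|\phi(x)-\phi(y)|<\varepsilon$ for all $y\in\mathcal{U}$. For a bounded function $g$ on $X$, $(g)^*(x)=\limsup_{y\to x}g(y)$ is its upper semicontinuous hull and $(g)_*(x)=\liminf_{y\to x}g(y)$ its lower semicontinuous hull. *)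

theory Defs
  imports "HOL-Analysis.Analysis"
begin

definition lsc_on :: "'a::topological_space set \<Rightarrow> ('a \<Rightarrow> real) \<Rightarrow> bool" where
  "lsc_on X f \<longleftrightarrow> (\<forall>x\<in>X. \<forall>t. t < f x \<longrightarrow> (\<forall>\<^sub>F y in at x within X. t < f y))"

definition usc_on :: "'a::topological_space set \<Rightarrow> ('a \<Rightarrow> real) \<Rightarrow> bool" where
  "usc_on X f \<longleftrightarrow> (\<forall>x\<in>X. \<forall>t. f x < t \<longrightarrow> (\<forall>\<^sub>F y in at x within X. f y < t))"

definition quasicontinuous_on :: "'a::topological_space set \<Rightarrow> ('a \<Rightarrow> real) \<Rightarrow> bool" where
  "quasicontinuous_on X \<phi> \<longleftrightarrow>
     (\<forall>x\<in>X. \<forall>\<epsilon>>0. \<exists>U. openin (top_of_set X) U \<and> x \<in> closure U \<and>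
        (\<forall>y\<in>U. \<bar>\<phi> x - \<phi> y\<bar> < \<epsilon>))"

text \<open>Upper semicontinuous hull (g)^*(x) = limsup_{y->x} g(y) (limsup including the point x),
  and lower semicontinuous hull (g)_*(x) = liminf_{y->x} g(y), for bounded g on X.\<close>
definition usc_hull :: "'a::metric_space set \<Rightarrow> ('a \<Rightarrow> real) \<Rightarrow> 'a \<Rightarrow> real" where
  "usc_hull X g x = (INF e\<in>{0<..}. SUP y\<in>ball x e \<inter> X. g y)"

definition lsc_hull :: "'a::metric_space set \<Rightarrow> ('a \<Rightarrow> real) \<Rightarrow> 'a \<Rightarrow> real" where
  "lsc_hull X g x = (SUP e\<in>{0<..}. INF y\<in>ball x e \<inter> X. g y)"

text \<open>h is a representative of the class of f in C_ae(X,R): h bounded on X and h = f a.e. on X.\<close>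
definition in_class :: "'a::euclidean_space set \<Rightarrow> ('a \<Rightarrow> real) \<Rightarrow> ('a \<Rightarrow> real) \<Rightarrow> bool" where
  "in_class X f h \<longleftrightarrow> bounded (h ` X) \<and> (AE x in lebesgue_on X. h x = f x)"

definition C_ae :: "'a::euclidean_space set \<Rightarrow> ('a \<Rightarrow> real) \<Rightarrow> bool" where
  "C_ae X f \<longleftrightarrow> bounded (f ` X) \<and> (AE x in lebesgue_on X. isCont f x)"

end

theory Submission
  imports Defs
begin

(* The continuity points S of f have full measure, and a null set contains no nonempty open set,
  so S is dense in X.  Put f\<^sup>+ = limsup of f over S and f\<^sup>- = liminf of f over S; both
  agree with f on S, hence represent f, and (f\<^sup>-)\<^sup>* = f\<^sup>+, (f\<^sup>+)\<^sub>* = f\<^sup>-.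
  The usc hull of a lower semicontinuous function is quasicontinuous, which gives quasicontinuity
  of f\<^sup>+ and f\<^sup>-.  Conversely, a usc quasicontinuous function equals its limsup over
  any dense set; applied to the dense set of continuity points where a representative h equals f,
  this forces h = f\<^sup>+.  Finally f\<^sup>+ = f\<^sup>- almost everywhere, so their integrals
  agree. *)

section \<open>Semicontinuity\<close>

lemma closure_ball_Int_nonempty:
  assumes "x \<in> closure A" and "r > 0"
  obtains y where "y \<in> ball x r \<inter> A"
  using assms by (force simp: closure_approachable dist_commute)

lemma ball_subset_ball_dist: "ball z (r - dist x z) \<subseteq> ball x r"
proof
  fix y assume "y \<in> ball z (r - dist x z)"
  then show "y \<in> ball x r" unfolding mem_ball using dist_triangle[of x y z] by linarith
qed

lemma bounded_image_uminus: "bounded ((\<lambda>x. - g x) ` A) \<longleftrightarrow> bounded (g ` A)"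
  for g :: "'a \<Rightarrow> real"
  using bounded_uminus[of "g ` A"] by (simp add: image_image)

lemma isCont_uminus_iff: "isCont (\<lambda>x. - f x) a \<longleftrightarrow> isCont f a"
  for f :: "'a::metric_space \<Rightarrow> real"
proof
  assume "isCont (\<lambda>x. - f x) a"
  from isCont_minus[OF this] show "isCont f a" by simp
qed (rule isCont_minus)

lemma usc_onE:
  assumes "usc_on X h" and "x \<in> X" and "h x < t"
  obtains d where "d > 0" and "\<forall>y\<in>ball x d \<inter> X. h y < t"
proof -
  obtain d where "d > 0" and d: "\<forall>y\<in>X. y \<noteq> x \<and> dist y x < d \<longrightarrow> h y < t"
    using assms unfolding usc_on_def eventually_at by blast
  show ?thesis
  proof (rule that[OF \<open>d > 0\<close>], intro ballI)
    fix y assume "y \<in> ball x d \<inter> X"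
    with d \<open>h x < t\<close> show "h y < t" by (cases "y = x") (auto simp: dist_commute)
  qed
qed

lemma lsc_on_iff_usc_on_neg: "lsc_on X h \<longleftrightarrow> usc_on X (\<lambda>x. - h x)"
  unfolding lsc_on_def usc_on_def
proof safe
  fix x t assume H: "\<forall>x\<in>X. \<forall>t. t < h x \<longrightarrow> (\<forall>\<^sub>F y in at x within X. t < h y)"
    and "x \<in> X" and "- h x < t"
  then have "\<forall>\<^sub>F y in at x within X. - t < h y" using H[rule_format, of x "- t"] by simp
  then show "\<forall>\<^sub>F y in at x within X. - h y < t" by (rule eventually_mono) simp
next
  fix x t assume H: "\<forall>x\<in>X. \<forall>t. - h x < t \<longrightarrow> (\<forall>\<^sub>F y in at x within X. - h y < t)"
    and "x \<in> X" and "t < h x"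
  then have "\<forall>\<^sub>F y in at x within X. - h y < - t" using H[rule_format, of x "- t"] by simp
  then show "\<forall>\<^sub>F y in at x within X. t < h y" by (rule eventually_mono) simp
qed

lemma lsc_onE:
  assumes "lsc_on X h" and "x \<in> X" and "t < h x"
  obtains d where "d > 0" and "\<forall>y\<in>ball x d \<inter> X. t < h y"
proof -
  obtain d where "d > 0" and "\<forall>y\<in>ball x d \<inter> X. - h y < - t"
    by (rule usc_onE[of X "\<lambda>x. - h x" x "- t"])
      (use assms in \<open>simp_all add: lsc_on_iff_usc_on_neg\<close>)
  then show ?thesis using that by simp
qed

lemma usc_on_cong:
  assumes "\<And>x. x \<in> X \<Longrightarrow> g x = h x"
  shows "usc_on X g \<longleftrightarrow> usc_on X h"
proof -
  have "(\<forall>\<^sub>F y in at x within X. g y < t) \<longleftrightarrow> (\<forall>\<^sub>F y in at x within X. h y < t)" for x t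
    using assms by (intro eventually_cong) (auto simp: eventually_at_filter)
  then show ?thesis unfolding usc_on_def using assms by simp
qed

lemma lsc_on_cong:
  assumes "\<And>x. x \<in> X \<Longrightarrow> g x = h x"
  shows "lsc_on X g \<longleftrightarrow> lsc_on X h"
  using assms by (simp add: lsc_on_iff_usc_on_neg usc_on_cong[of X "\<lambda>x. - g x" "\<lambda>x. - h x"])

section \<open>Upper and lower semicontinuous hulls\<close>

lemma usc_hull_bdd:
  fixes g :: "'a::metric_space \<Rightarrow> real"
  assumes x: "x \<in> closure A" and bnd: "bounded (g ` A)"
  shows bdd_above_ball_Int: "bdd_above (g ` (ball x e \<inter> A))"
    and bdd_below_SUP_ball_Int: "bdd_below ((\<lambda>e. SUP y\<in>ball x e \<inter> A. g y) ` {0<..})"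
proof -
  obtain B where B: "\<And>y. y \<in> A \<Longrightarrow> \<bar>g y\<bar> \<le> B"
    using bnd by (auto simp: bounded_iff)
  show ba: "bdd_above (g ` (ball x e \<inter> A))" for e
    using B by (intro bdd_aboveI[of _ B]) (auto simp: abs_le_iff)
  have "- B \<le> (SUP y\<in>ball x e \<inter> A. g y)" if "e > 0" for e
  proof -
    obtain y where y: "y \<in> ball x e \<inter> A" using closure_ball_Int_nonempty[OF x \<open>e > 0\<close>] .
    have "- B \<le> g y" using B[of y] y by (simp add: abs_le_iff)
    also have "\<dots> \<le> (SUP y\<in>ball x e \<inter> A. g y)" by (rule cSUP_upper[OF y ba])
    finally show ?thesis .
  qed
  then show "bdd_below ((\<lambda>e. SUP y\<in>ball x e \<inter> A. g y) ` {0<..})"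
    by (intro bdd_belowI[of _ "- B"]) auto
qed

lemma usc_hull_lessE:
  fixes g :: "'a::metric_space \<Rightarrow> real"
  assumes x: "x \<in> closure A" and bnd: "bounded (g ` A)" and less: "usc_hull A g x < t"
  obtains r where "r > 0" and "\<forall>y\<in>ball x r \<inter> A. g y < t"
proof -
  obtain r where r: "r > 0" "(SUP y\<in>ball x r \<inter> A. g y) < t"
    using less cINF_less_iff[OF _ bdd_below_SUP_ball_Int[OF x bnd]] by (auto simp: usc_hull_def)
  show ?thesis
  proof (rule that[OF r(1)], intro ballI)
    fix y assume "y \<in> ball x r \<inter> A"
    from cSUP_upper[OF this bdd_above_ball_Int[OF x bnd]] r(2) show "g y < t" by linarith
  qed
qed

lemma less_usc_hullE:
  fixes g :: "'a::metric_space \<Rightarrow> real"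
  assumes x: "x \<in> closure A" and bnd: "bounded (g ` A)" and less: "t < usc_hull A g x"
    and r: "r > 0"
  obtains y where "y \<in> ball x r \<inter> A" and "t < g y"
proof -
  have "usc_hull A g x \<le> (SUP y\<in>ball x r \<inter> A. g y)"
    unfolding usc_hull_def using r by (intro cINF_lower[OF bdd_below_SUP_ball_Int[OF x bnd]]) auto
  then have "t < (SUP y\<in>ball x r \<inter> A. g y)" using less by linarith
  moreover have "ball x r \<inter> A \<noteq> {}" using closure_ball_Int_nonempty[OF x r] by blast
  ultimately have "\<exists>y\<in>ball x r \<inter> A. t < g y"
    using less_cSUP_iff[OF _ bdd_above_ball_Int[OF x bnd]] by simp
  then show ?thesis using that by blast
qed

lemma usc_hull_le_iff:
  fixes g :: "'a::metric_space \<Rightarrow> real"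
  assumes x: "x \<in> closure A" and bnd: "bounded (g ` A)"
  shows "usc_hull A g x \<le> c \<longleftrightarrow> (\<forall>t>c. \<exists>r>0. \<forall>y\<in>ball x r \<inter> A. g y < t)"
proof (intro iffI allI impI)
  fix t assume "usc_hull A g x \<le> c" and "c < t"
  then have "usc_hull A g x < t" by linarith
  then obtain r where "r > 0" "\<forall>y\<in>ball x r \<inter> A. g y < t" by (rule usc_hull_lessE[OF x bnd])
  then show "\<exists>r>0. \<forall>y\<in>ball x r \<inter> A. g y < t" by blast
next
  assume H: "\<forall>t>c. \<exists>r>0. \<forall>y\<in>ball x r \<inter> A. g y < t"
  show "usc_hull A g x \<le> c"
  proof (rule ccontr)
    assume "\<not> usc_hull A g x \<le> c"
    then have "c < (c + usc_hull A g x) / 2" and t: "(c + usc_hull A g x) / 2 < usc_hull A g x"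
      by auto
    then obtain r where "r > 0" and r: "\<forall>y\<in>ball x r \<inter> A. g y < (c + usc_hull A g x) / 2"
      using H by blast
    obtain y where y: "y \<in> ball x r \<inter> A" and "(c + usc_hull A g x) / 2 < g y"
      by (rule less_usc_hullE[OF x bnd t \<open>r > 0\<close>])
    with r[rule_format, OF y] show False by linarith
  qed
qed

lemma le_usc_hull_iff:
  fixes g :: "'a::metric_space \<Rightarrow> real"
  assumes x: "x \<in> closure A" and bnd: "bounded (g ` A)"
  shows "c \<le> usc_hull A g x \<longleftrightarrow> (\<forall>t<c. \<forall>r>0. \<exists>y\<in>ball x r \<inter> A. t < g y)"
proof (intro iffI allI impI)
  fix t r :: real assume "c \<le> usc_hull A g x" and "t < c" and "r > 0"
  then have "t < usc_hull A g x" by linarith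
  then obtain y where "y \<in> ball x r \<inter> A" "t < g y" by (rule less_usc_hullE[OF x bnd _ \<open>r > 0\<close>])
  then show "\<exists>y\<in>ball x r \<inter> A. t < g y" by blast
next
  assume H: "\<forall>t<c. \<forall>r>0. \<exists>y\<in>ball x r \<inter> A. t < g y"
  show "c \<le> usc_hull A g x"
  proof (rule ccontr)
    assume "\<not> c \<le> usc_hull A g x"
    then have t: "usc_hull A g x < (c + usc_hull A g x) / 2" and "(c + usc_hull A g x) / 2 < c"
      by auto
    obtain r where "r > 0" and r: "\<forall>y\<in>ball x r \<inter> A. g y < (c + usc_hull A g x) / 2"
      by (rule usc_hull_lessE[OF x bnd t])
    then obtain y where y: "y \<in> ball x r \<inter> A" and "(c + usc_hull A g x) / 2 < g y"
      using H \<open>(c + usc_hull A g x) / 2 < c\<close> by blast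
    with r show False by force
  qed
qed

lemma usc_hull_cong:
  assumes "\<And>y. y \<in> A \<Longrightarrow> g y = h y"
  shows "usc_hull A g x = usc_hull A h x"
  unfolding usc_hull_def using assms by (intro INF_cong SUP_cong refl) auto

lemma usc_hull_mono:
  fixes g h :: "'a::metric_space \<Rightarrow> real"
  assumes x: "x \<in> closure A" and bnd: "bounded (g ` A)" "bounded (h ` A)"
    and le: "\<And>y. y \<in> A \<Longrightarrow> g y \<le> h y"
  shows "usc_hull A g x \<le> usc_hull A h x"
  unfolding usc_hull_le_iff[OF x bnd(1)]
proof (intro allI impI)
  fix t assume "usc_hull A h x < t"
  then obtain r where "r > 0" and r: "\<forall>y\<in>ball x r \<inter> A. h y < t"
    by (rule usc_hull_lessE[OF x bnd(2)])
  have "g y < t" if "y \<in> ball x r \<inter> A" for y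
    using le[of y] bspec[OF r that] that by auto
  with \<open>r > 0\<close> show "\<exists>r>0. \<forall>y\<in>ball x r \<inter> A. g y < t" by blast
qed

lemma usc_hull_subset_mono:
  fixes g :: "'a::metric_space \<Rightarrow> real"
  assumes "A \<subseteq> B" and x: "x \<in> closure A" and bnd: "bounded (g ` B)"
  shows "usc_hull A g x \<le> usc_hull B g x"
proof -
  have xB: "x \<in> closure B" using closure_mono[OF \<open>A \<subseteq> B\<close>] x by blast
  have bndA: "bounded (g ` A)" using bounded_subset[OF bnd] \<open>A \<subseteq> B\<close> by blast
  show ?thesis
    unfolding le_usc_hull_iff[OF xB bnd]
  proof (intro allI impI)
    fix t r :: real assume "t < usc_hull A g x" and "r > 0"
    then obtain y where "y \<in> ball x r \<inter> A" "t < g y" by (rule less_usc_hullE[OF x bndA])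
    with \<open>A \<subseteq> B\<close> show "\<exists>y\<in>ball x r \<inter> B. t < g y" by blast
  qed
qed

lemma usc_hull_ge_self:
  fixes g :: "'a::metric_space \<Rightarrow> real"
  assumes x: "x \<in> A" and bnd: "bounded (g ` A)"
  shows "g x \<le> usc_hull A g x"
  unfolding le_usc_hull_iff[OF closure_subset[THEN subsetD, OF x] bnd]
  using x by (auto intro!: bexI[of _ x])

lemma usc_hull_eq_if_isCont:
  fixes g :: "'a::metric_space \<Rightarrow> real"
  assumes x: "x \<in> closure A" and bnd: "bounded (g ` A)" and cont: "isCont g x"
  shows "usc_hull A g x = g x"
proof (rule antisym)
  show "usc_hull A g x \<le> g x"
    unfolding usc_hull_le_iff[OF x bnd]
  proof (intro allI impI)
    fix t assume "g x < t"
    then obtain d where "d > 0" and "\<forall>y. dist y x < d \<longrightarrow> dist (g y) (g x) < t - g x"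
      using cont unfolding continuous_at_eps_delta by (metis diff_gt_0_iff_gt)
    then show "\<exists>r>0. \<forall>y\<in>ball x r \<inter> A. g y < t"
      by (intro exI[of _ d]) (auto simp: dist_real_def dist_commute abs_less_iff)
  qed
  show "g x \<le> usc_hull A g x"
    unfolding le_usc_hull_iff[OF x bnd]
  proof (intro allI impI)
    fix t r :: real assume "t < g x" and "r > 0"
    then obtain d where "d > 0" and d: "\<forall>y. dist y x < d \<longrightarrow> dist (g y) (g x) < g x - t"
      using cont unfolding continuous_at_eps_delta by (metis diff_gt_0_iff_gt)
    obtain y where y: "y \<in> ball x (min r d) \<inter> A"
      using closure_ball_Int_nonempty[OF x, of "min r d"] \<open>r > 0\<close> \<open>d > 0\<close> by auto
    then have "t < g y" using d by (auto simp: dist_real_def dist_commute abs_less_iff)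
    with y show "\<exists>y\<in>ball x r \<inter> A. t < g y" by auto
  qed
qed

lemma usc_hull_eq_if_usc_on:
  fixes h :: "'a::metric_space \<Rightarrow> real"
  assumes usc: "usc_on X h" and x: "x \<in> X" and bnd: "bounded (h ` X)"
  shows "usc_hull X h x = h x"
proof (rule antisym[OF _ usc_hull_ge_self[OF x bnd]])
  show "usc_hull X h x \<le> h x"
    unfolding usc_hull_le_iff[OF closure_subset[THEN subsetD, OF x] bnd]
  proof (intro allI impI)
    fix t assume "h x < t"
    then obtain d where "d > 0" "\<forall>y\<in>ball x d \<inter> X. h y < t" by (rule usc_onE[OF usc x])
    then show "\<exists>r>0. \<forall>y\<in>ball x r \<inter> X. h y < t" by blast
  qed
qed

lemma bounded_usc_hull:
  fixes g :: "'a::metric_space \<Rightarrow> real"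
  assumes X: "X \<subseteq> closure A" and bnd: "bounded (g ` A)"
  shows "bounded (usc_hull A g ` X)"
proof -
  obtain B where B: "\<And>y. y \<in> A \<Longrightarrow> \<bar>g y\<bar> \<le> B"
    using bnd by (auto simp: bounded_iff)
  have "\<bar>usc_hull A g x\<bar> \<le> B" if "x \<in> X" for x
  proof -
    have x: "x \<in> closure A" using X that by blast
    have "usc_hull A g x \<le> B"
      unfolding usc_hull_le_iff[OF x bnd]
    proof (intro allI impI exI[of _ 1] conjI ballI)
      fix t y assume "B < t" and "y \<in> ball x 1 \<inter> A"
      with B[of y] show "g y < t" by (auto simp: abs_le_iff)
    qed simp
    moreover have "- B \<le> usc_hull A g x"
      unfolding le_usc_hull_iff[OF x bnd]
    proof (intro allI impI)
      fix t r :: real assume "t < - B" and "r > 0"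
      then obtain y where y: "y \<in> ball x r \<inter> A" using closure_ball_Int_nonempty[OF x] by blast
      moreover have "t < g y" using B[of y] y \<open>t < - B\<close> by (auto simp: abs_le_iff)
      ultimately show "\<exists>y\<in>ball x r \<inter> A. t < g y" by blast
    qed
    ultimately show ?thesis by linarith
  qed
  then show ?thesis unfolding bounded_iff by auto
qed

lemma usc_on_usc_hull:
  fixes g :: "'a::metric_space \<Rightarrow> real"
  assumes X: "X \<subseteq> closure A" and bnd: "bounded (g ` A)"
  shows "usc_on X (usc_hull A g)"
  unfolding usc_on_def
proof (intro ballI allI impI)
  fix x t assume "x \<in> X" and lt: "usc_hull A g x < t"
  then have x: "x \<in> closure A" using X by blast
  define s where "s = (usc_hull A g x + t) / 2"
  have "s < t" and s: "usc_hull A g x < s" using lt by (auto simp: s_def)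
  obtain r where "r > 0" and r: "\<forall>y\<in>ball x r \<inter> A. g y < s"
    by (rule usc_hull_lessE[OF x bnd s])
  have "usc_hull A g z < t" if "z \<in> X" and "dist z x < r" for z
  proof -
    have z: "z \<in> closure A" using X that by blast
    have "usc_hull A g z \<le> s"
      unfolding usc_hull_le_iff[OF z bnd]
    proof (intro allI impI exI[of _ "r - dist x z"] conjI ballI)
      fix t' y assume "s < t'" and "y \<in> ball z (r - dist x z) \<inter> A"
      then show "g y < t'" using r ball_subset_ball_dist by force
    qed (use that in \<open>simp add: dist_commute\<close>)
    with \<open>s < t\<close> show ?thesis by linarith
  qed
  then show "\<forall>\<^sub>F y in at x within X. usc_hull A g y < t"
    unfolding eventually_at using \<open>r > 0\<close> by blast
qed

(* On S, f coincides with its limsup over Q, which is already usc on closure Q. *)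
lemma usc_hull_eq_on_dense_subset:
  fixes f :: "'a::metric_space \<Rightarrow> real"
  assumes "Q \<subseteq> S" and "S \<subseteq> closure Q" and cont: "\<And>y. y \<in> S \<Longrightarrow> isCont f y"
    and bnd: "bounded (f ` S)" and x: "x \<in> closure Q"
  shows "usc_hull S f x = usc_hull Q f x"
proof (rule antisym)
  have bndQ: "bounded (f ` Q)" using bounded_subset[OF bnd] \<open>Q \<subseteq> S\<close> by blast
  have bnd_hull: "bounded (usc_hull Q f ` closure Q)" by (rule bounded_usc_hull[OF subset_refl bndQ])
  have "usc_hull S f x = usc_hull S (usc_hull Q f) x"
    using assms(2) by (intro usc_hull_cong usc_hull_eq_if_isCont[symmetric] bndQ cont) auto
  also have "\<dots> \<le> usc_hull (closure Q) (usc_hull Q f) x"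
    using x closure_mono[OF \<open>Q \<subseteq> S\<close>] by (intro usc_hull_subset_mono[OF assms(2) _ bnd_hull]) auto
  also have "\<dots> = usc_hull Q f x"
    by (rule usc_hull_eq_if_usc_on[OF usc_on_usc_hull[OF subset_refl bndQ] x bnd_hull])
  finally show "usc_hull S f x \<le> usc_hull Q f x" .
  show "usc_hull Q f x \<le> usc_hull S f x" by (rule usc_hull_subset_mono[OF \<open>Q \<subseteq> S\<close> x bnd])
qed

lemma lsc_hull_eq_neg_usc_hull: "lsc_hull A g = (\<lambda>x. - usc_hull A (\<lambda>y. - g y) x)"
proof
  fix x
  have "usc_hull A (\<lambda>y. - g y) x = (INF e\<in>{0<..}. - (INF y\<in>ball x e \<inter> A. g y))"
    unfolding usc_hull_def by (intro INF_cong refl) (simp add: Inf_real_def image_image)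
  also have "\<dots> = - lsc_hull A g x"
    unfolding lsc_hull_def Inf_real_def by (simp add: image_image)
  finally show "lsc_hull A g x = - usc_hull A (\<lambda>y. - g y) x" by simp
qed

lemma lsc_hull_cong:
  assumes "\<And>y. y \<in> A \<Longrightarrow> g y = h y"
  shows "lsc_hull A g x = lsc_hull A h x"
  unfolding lsc_hull_def using assms by (intro SUP_cong INF_cong refl) auto

lemma bounded_lsc_hull:
  fixes g :: "'a::metric_space \<Rightarrow> real"
  assumes "X \<subseteq> closure A" and "bounded (g ` A)"
  shows "bounded (lsc_hull A g ` X)"
  using bounded_usc_hull[of X A "\<lambda>y. - g y"] assms
  by (simp add: lsc_hull_eq_neg_usc_hull bounded_image_uminus)

lemma lsc_hull_eq_if_isCont:
  fixes g :: "'a::metric_space \<Rightarrow> real"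
  assumes "x \<in> closure A" and "bounded (g ` A)" and "isCont g x"
  shows "lsc_hull A g x = g x"
  using usc_hull_eq_if_isCont[of x A "\<lambda>y. - g y"] assms
  by (simp add: lsc_hull_eq_neg_usc_hull bounded_image_uminus isCont_uminus_iff)

lemma lsc_on_lsc_hull:
  fixes g :: "'a::metric_space \<Rightarrow> real"
  assumes "X \<subseteq> closure A" and "bounded (g ` A)"
  shows "lsc_on X (lsc_hull A g)"
  unfolding lsc_on_iff_usc_on_neg lsc_hull_eq_neg_usc_hull minus_minus
  by (rule usc_on_usc_hull) (use assms bounded_image_uminus in auto)

lemma lsc_hull_le_usc_hull:
  fixes g :: "'a::metric_space \<Rightarrow> real"
  assumes x: "x \<in> closure A" and bnd: "bounded (g ` A)"
  shows "lsc_hull A g x \<le> usc_hull A g x"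
proof -
  have bnd': "bounded ((\<lambda>y. - g y) ` A)" using bnd bounded_image_uminus by blast
  have "- usc_hull A (\<lambda>y. - g y) x \<le> usc_hull A g x"
    unfolding le_usc_hull_iff[OF x bnd]
  proof (intro allI impI)
    fix t r :: real assume "t < - usc_hull A (\<lambda>y. - g y) x" and "r > 0"
    then have "usc_hull A (\<lambda>y. - g y) x < - t" by linarith
    then obtain d where "d > 0" and d: "\<forall>y\<in>ball x d \<inter> A. - g y < - t"
      by (rule usc_hull_lessE[OF x bnd'])
    obtain y where y: "y \<in> ball x (min r d) \<inter> A"
      using closure_ball_Int_nonempty[OF x, of "min r d"] \<open>r > 0\<close> \<open>d > 0\<close> by auto
    then have "t < g y" using d by auto
    with y show "\<exists>y\<in>ball x r \<inter> A. t < g y" by auto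
  qed
  then show ?thesis by (simp add: lsc_hull_eq_neg_usc_hull)
qed

section \<open>Quasicontinuity\<close>

lemma quasicontinuous_on_neg_iff: "quasicontinuous_on X (\<lambda>x. - h x) \<longleftrightarrow> quasicontinuous_on X h"
  unfolding quasicontinuous_on_def by (simp add: abs_minus_commute)

lemma quasicontinuous_on_cong:
  assumes "\<And>x. x \<in> X \<Longrightarrow> g x = h x"
  shows "quasicontinuous_on X g \<longleftrightarrow> quasicontinuous_on X h"
proof -
  have "(\<forall>y\<in>U. \<bar>g x - g y\<bar> < \<epsilon>) \<longleftrightarrow> (\<forall>y\<in>U. \<bar>h x - h y\<bar> < \<epsilon>)"
    if "x \<in> X" and "openin (top_of_set X) U" for x U \<epsilon>
  proof -
    have "g x = h x" and "\<forall>y\<in>U. g y = h y"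
      using assms that openin_imp_subset[OF that(2)] by auto
    then show ?thesis by simp
  qed
  then show ?thesis unfolding quasicontinuous_on_def by meson
qed

lemma quasicontinuous_onI_ball:
  fixes h :: "'a::metric_space \<Rightarrow> real"
  assumes X: "open X"
    and H: "\<And>x \<epsilon> d. x \<in> X \<Longrightarrow> \<epsilon> > 0 \<Longrightarrow> d > 0 \<Longrightarrow>
      \<exists>y \<rho>. \<rho> > 0 \<and> dist y x < d \<and> ball y \<rho> \<subseteq> {z\<in>X. \<bar>h x - h z\<bar> < \<epsilon>}"
  shows "quasicontinuous_on X h"
  unfolding quasicontinuous_on_def
proof (intro ballI allI impI)
  fix x and \<epsilon> :: real assume x: "x \<in> X" and "\<epsilon> > 0"
  define U where "U = interior {z\<in>X. \<bar>h x - h z\<bar> < \<epsilon>}"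
  have "U \<subseteq> X" using interior_subset unfolding U_def by blast
  then have "openin (top_of_set X) U" by (simp add: openin_open_eq[OF X] U_def)
  moreover have "x \<in> closure U" unfolding closure_approachable
  proof (intro allI impI)
    fix d :: real assume "d > 0"
    then obtain y \<rho> where "\<rho> > 0" and "dist y x < d" and "ball y \<rho> \<subseteq> {z\<in>X. \<bar>h x - h z\<bar> < \<epsilon>}"
      using H[OF x \<open>\<epsilon> > 0\<close>] by blast
    then have "ball y \<rho> \<subseteq> U" unfolding U_def by (intro interior_maximal) auto
    with \<open>\<rho> > 0\<close> have "y \<in> U" by auto
    with \<open>dist y x < d\<close> show "\<exists>y\<in>U. dist y x < d" by blast
  qed
  moreover have "\<forall>y\<in>U. \<bar>h x - h y\<bar> < \<epsilon>" using interior_subset unfolding U_def by blast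
  ultimately show "\<exists>U. openin (top_of_set X) U \<and> x \<in> closure U \<and> (\<forall>y\<in>U. \<bar>h x - h y\<bar> < \<epsilon>)"
    by blast
qed

(* Near x pick y with a y close to b x = usc_hull X a x; lower semicontinuity of a keeps
  a \<le> b large on a ball around y, and upper semicontinuity of b keeps b small near x. *)
lemma quasicontinuous_on_usc_hull:
  fixes a :: "'a::metric_space \<Rightarrow> real"
  assumes X: "open X" and lsc: "lsc_on X a" and bnd: "bounded (a ` X)"
  shows "quasicontinuous_on X (usc_hull X a)"
proof (rule quasicontinuous_onI_ball[OF X])
  fix x and \<epsilon> d :: real assume x: "x \<in> X" and "\<epsilon> > 0" and "d > 0"
  let ?b = "usc_hull X a"
  have x': "x \<in> closure X" using x closure_subset by blast
  have "?b x < ?b x + \<epsilon>" using \<open>\<epsilon> > 0\<close> by simp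
  then obtain d1 where "d1 > 0" and d1: "\<forall>z\<in>ball x d1 \<inter> X. ?b z < ?b x + \<epsilon>"
    by (rule usc_onE[OF usc_on_usc_hull[OF closure_subset bnd] x])
  obtain e0 where "e0 > 0" and e0: "ball x e0 \<subseteq> X" using X x open_contains_ball by blast
  define r where "r = min d (min d1 e0)"
  have "r > 0" using \<open>d > 0\<close> \<open>d1 > 0\<close> \<open>e0 > 0\<close> by (simp add: r_def)
  have "?b x - \<epsilon> < ?b x" using \<open>\<epsilon> > 0\<close> by simp
  then obtain y where y: "y \<in> ball x r \<inter> X" and ay: "?b x - \<epsilon> < a y"
    by (rule less_usc_hullE[OF x' bnd _ \<open>r > 0\<close>])
  have "y \<in> X" using y by blast
  obtain d2 where "d2 > 0" and d2: "\<forall>z\<in>ball y d2 \<inter> X. ?b x - \<epsilon> < a z"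
    by (rule lsc_onE[OF lsc \<open>y \<in> X\<close> ay])
  define \<rho> where "\<rho> = min d2 (r - dist x y)"
  have "\<rho> > 0" using \<open>d2 > 0\<close> y by (simp add: \<rho>_def)
  have "ball y \<rho> \<subseteq> ball y (r - dist x y)" by (simp add: \<rho>_def subset_ball)
  also have "\<dots> \<subseteq> ball x r" by (rule ball_subset_ball_dist)
  finally have "ball y \<rho> \<subseteq> ball x r" .
  have "ball y \<rho> \<subseteq> {z\<in>X. \<bar>?b x - ?b z\<bar> < \<epsilon>}"
  proof
    fix z assume z: "z \<in> ball y \<rho>"
    with \<open>ball y \<rho> \<subseteq> ball x r\<close> have zx: "z \<in> ball x r" by blast
    with e0 have zX: "z \<in> X" by (auto simp: r_def)
    have "?b x - \<epsilon> < a z" using d2 z zX by (auto simp: \<rho>_def)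
    also have "a z \<le> ?b z" by (rule usc_hull_ge_self[OF zX bnd])
    finally have "?b x - \<epsilon> < ?b z" .
    moreover have "?b z < ?b x + \<epsilon>" using d1 zx zX by (auto simp: r_def)
    ultimately show "z \<in> {z\<in>X. \<bar>?b x - ?b z\<bar> < \<epsilon>}" using zX by (simp add: abs_less_iff)
  qed
  moreover have "dist y x < d" using y by (simp add: r_def dist_commute)
  ultimately show "\<exists>y \<rho>. \<rho> > 0 \<and> dist y x < d \<and> ball y \<rho> \<subseteq> {z\<in>X. \<bar>?b x - ?b z\<bar> < \<epsilon>}"
    using \<open>\<rho> > 0\<close> by blast
qed

lemma quasicontinuous_on_lsc_hull:
  fixes b :: "'a::metric_space \<Rightarrow> real"
  assumes X: "open X" and usc: "usc_on X b" and bnd: "bounded (b ` X)"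
  shows "quasicontinuous_on X (lsc_hull X b)"
proof -
  have "quasicontinuous_on X (usc_hull X (\<lambda>y. - b y))"
    using usc bnd by (intro quasicontinuous_on_usc_hull[OF X])
      (simp_all add: lsc_on_iff_usc_on_neg bounded_image_uminus)
  then show ?thesis by (simp add: lsc_hull_eq_neg_usc_hull quasicontinuous_on_neg_iff)
qed

lemma quasicontinuous_le_usc_hull:
  fixes h :: "'a::metric_space \<Rightarrow> real"
  assumes X: "open X" and dense: "X \<subseteq> closure A" and qc: "quasicontinuous_on X h"
    and bnd: "bounded (h ` A)" and x: "x \<in> X"
  shows "h x \<le> usc_hull A h x"
  unfolding le_usc_hull_iff[OF subsetD[OF dense x] bnd]
proof (intro allI impI)
  fix t r :: real assume "t < h x" and "r > 0"
  then have "h x - t > 0" by simp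
  then obtain U where U: "openin (top_of_set X) U" "x \<in> closure U"
    and hU: "\<forall>y\<in>U. \<bar>h x - h y\<bar> < h x - t"
    using qc x unfolding quasicontinuous_on_def by blast
  have "open U" "U \<subseteq> X" using U(1) by (simp_all add: openin_open_eq[OF X])
  obtain u where "u \<in> U" and "dist u x < r"
    using U(2) \<open>r > 0\<close> unfolding closure_approachable by blast
  then have "u \<in> ball x r \<inter> U \<inter> closure A"
    using \<open>U \<subseteq> X\<close> dense by (auto simp: dist_commute)
  then have "ball x r \<inter> U \<inter> closure A \<noteq> {}" by blast
  then have "ball x r \<inter> U \<inter> A \<noteq> {}"
    using open_Int_closure_eq_empty[of "ball x r \<inter> U" A] \<open>open U\<close> by auto
  then obtain y where y: "y \<in> ball x r \<inter> A" and "y \<in> U" by blast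
  with hU have "t < h y" by (auto simp: abs_less_iff)
  with y show "\<exists>y\<in>ball x r \<inter> A. t < h y" by blast
qed

(* Upper semicontinuity gives \<le>; quasicontinuity gives \<ge>, since every open U with
  x in its closure meets the dense set A. *)
lemma usc_quasicontinuous_eq_usc_hull:
  fixes h :: "'a::metric_space \<Rightarrow> real"
  assumes X: "open X" and "A \<subseteq> X" and dense: "X \<subseteq> closure A"
    and usc: "usc_on X h" and qc: "quasicontinuous_on X h" and bnd: "bounded (h ` X)"
    and x: "x \<in> X"
  shows "usc_hull A h x = h x"
proof (rule antisym)
  have "usc_hull A h x \<le> usc_hull X h x"
    using dense x by (intro usc_hull_subset_mono[OF \<open>A \<subseteq> X\<close> _ bnd]) auto
  also have "\<dots> = h x" by (rule usc_hull_eq_if_usc_on[OF usc x bnd])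
  finally show "usc_hull A h x \<le> h x" .
  have "bounded (h ` A)" using bounded_subset[OF bnd] \<open>A \<subseteq> X\<close> by blast
  then show "h x \<le> usc_hull A h x" by (rule quasicontinuous_le_usc_hull[OF X dense qc _ x])
qed

section \<open>The representatives of a class in C_ae\<close>

lemma dense_if_AE_lebesgue_on:
  fixes X :: "'a::euclidean_space set"
  assumes X: "open X" and P: "AE x in lebesgue_on X. P x"
  shows "X \<subseteq> closure {x\<in>X. P x}"
proof
  fix x assume "x \<in> X"
  have "AE y in lebesgue. y \<in> X \<longrightarrow> P y"
    using P X by (simp add: AE_restrict_space_iff)
  then obtain N where PN: "{y \<in> space lebesgue. \<not> (y \<in> X \<longrightarrow> P y)} \<subseteq> N"
    and N0: "emeasure lebesgue N = 0" and Nsets: "N \<in> sets lebesgue"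
    by (rule AE_E)
  have N: "N \<in> null_sets lebesgue" by (rule null_setsI[OF N0 Nsets])
  show "x \<in> closure {x\<in>X. P x}" unfolding closure_approachable
  proof (intro allI impI)
    fix e :: real assume "e > 0"
    show "\<exists>y\<in>{x\<in>X. P x}. dist y x < e"
    proof (rule ccontr)
      assume "\<not> ?thesis"
      then have "ball x e \<inter> X \<subseteq> N" using PN by (auto simp: dist_commute)
      then have "ball x e \<inter> X \<in> null_sets lebesgue"
        using N X by (auto intro: null_sets_subset)
      moreover have "ball x e \<inter> X \<noteq> {}" using \<open>x \<in> X\<close> \<open>e > 0\<close> centre_in_ball by blast
      ultimately show False
        using open_not_negligible[of "ball x e \<inter> X"] X by (auto simp: negligible_iff_null_sets)
    qed
  qed
qed

lemma usc_on_borel_measurable: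
  fixes g :: "'a::euclidean_space \<Rightarrow> real"
  assumes X: "open X" and usc: "usc_on X g"
  shows "g \<in> borel_measurable (lebesgue_on X)"
proof (rule borel_measurableI_less)
  fix p
  have "open {x\<in>X. g x < p}"
    unfolding open_contains_ball
  proof
    fix x assume "x \<in> {x\<in>X. g x < p}"
    then have "x \<in> X" and "g x < p" by auto
    then obtain d where "d > 0" and d: "\<forall>y\<in>ball x d \<inter> X. g y < p"
      by (rule usc_onE[OF usc])
    obtain e where "e > 0" and e: "ball x e \<subseteq> X"
      using X \<open>x \<in> X\<close> open_contains_ball by blast
    have "ball x (min d e) \<subseteq> {x\<in>X. g x < p}" using d e by auto
    with \<open>d > 0\<close> \<open>e > 0\<close> show "\<exists>e>0. ball x e \<subseteq> {x\<in>X. g x < p}"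
      by (intro exI[of _ "min d e"]) auto
  qed
  then show "{x \<in> space (lebesgue_on X). g x < p} \<in> sets (lebesgue_on X)"
    using X by (simp add: sets_restrict_space_iff space_restrict_space)
qed

lemma C_ae_uminus_iff: "C_ae X (\<lambda>x. - f x) \<longleftrightarrow> C_ae X f"
  unfolding C_ae_def by (simp add: bounded_image_uminus isCont_uminus_iff)

lemma in_class_uminus_iff: "in_class X (\<lambda>x. - f x) (\<lambda>x. - h x) \<longleftrightarrow> in_class X f h"
  unfolding in_class_def by (simp add: bounded_image_uminus)

(* f\<^sup>+ and f\<^sup>- of the paper: limsup and liminf of f over its points of continuity. *)
definition upper_rep :: "'a::metric_space set \<Rightarrow> ('a \<Rightarrow> real) \<Rightarrow> 'a \<Rightarrow> real" where
  "upper_rep X f = usc_hull {x\<in>X. isCont f x} f"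

definition lower_rep :: "'a::metric_space set \<Rightarrow> ('a \<Rightarrow> real) \<Rightarrow> 'a \<Rightarrow> real" where
  "lower_rep X f = lsc_hull {x\<in>X. isCont f x} f"

lemma lower_rep_eq_neg_upper_rep: "lower_rep X f = (\<lambda>x. - upper_rep X (\<lambda>y. - f y) x)"
  unfolding lower_rep_def upper_rep_def by (simp add: lsc_hull_eq_neg_usc_hull isCont_uminus_iff)

context
  fixes X :: "'a::euclidean_space set" and f :: "'a \<Rightarrow> real"
  assumes X: "open X" and f: "C_ae X f"
begin

lemma dense_isCont_points: "X \<subseteq> closure {x\<in>X. isCont f x}"
  using dense_if_AE_lebesgue_on[OF X] f by (simp add: C_ae_def)

lemma bounded_isCont_points: "bounded (f ` {x\<in>X. isCont f x})"
  by (rule bounded_subset[of "f ` X"]) (use f in \<open>auto simp: C_ae_def\<close>)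

lemma upper_rep_eq_at_isCont: "x \<in> X \<Longrightarrow> isCont f x \<Longrightarrow> upper_rep X f x = f x"
  unfolding upper_rep_def
  by (rule usc_hull_eq_if_isCont[OF _ bounded_isCont_points]) (use dense_isCont_points in blast)

lemma lower_rep_eq_at_isCont: "x \<in> X \<Longrightarrow> isCont f x \<Longrightarrow> lower_rep X f x = f x"
  unfolding lower_rep_def
  by (rule lsc_hull_eq_if_isCont[OF _ bounded_isCont_points]) (use dense_isCont_points in blast)

lemma bounded_upper_rep: "bounded (upper_rep X f ` X)"
  unfolding upper_rep_def by (rule bounded_usc_hull[OF dense_isCont_points bounded_isCont_points])

lemma bounded_lower_rep: "bounded (lower_rep X f ` X)"
  unfolding lower_rep_def by (rule bounded_lsc_hull[OF dense_isCont_points bounded_isCont_points])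

lemma usc_on_upper_rep: "usc_on X (upper_rep X f)"
  unfolding upper_rep_def by (rule usc_on_usc_hull[OF dense_isCont_points bounded_isCont_points])

lemma lsc_on_lower_rep: "lsc_on X (lower_rep X f)"
  unfolding lower_rep_def by (rule lsc_on_lsc_hull[OF dense_isCont_points bounded_isCont_points])

lemma AE_eq_if_eq_at_isCont:
  assumes "\<And>x. x \<in> X \<Longrightarrow> isCont f x \<Longrightarrow> h x = f x"
  shows "AE x in lebesgue_on X. h x = f x"
proof -
  have "AE x in lebesgue_on X. isCont f x" using f by (simp add: C_ae_def)
  moreover have "AE x in lebesgue_on X. x \<in> X"
    using AE_space[of "lebesgue_on X"] by (simp add: space_restrict_space)
  ultimately show ?thesis by eventually_elim (simp add: assms)
qed

lemma in_class_upper_rep: "in_class X f (upper_rep X f)"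
  unfolding in_class_def
  using bounded_upper_rep AE_eq_if_eq_at_isCont[OF upper_rep_eq_at_isCont] by blast

lemma in_class_lower_rep: "in_class X f (lower_rep X f)"
  unfolding in_class_def
  using bounded_lower_rep AE_eq_if_eq_at_isCont[OF lower_rep_eq_at_isCont] by blast

lemma usc_hull_lower_rep:
  assumes "x \<in> X"
  shows "usc_hull X (lower_rep X f) x = upper_rep X f x"
proof (rule antisym)
  let ?S = "{x\<in>X. isCont f x}"
  have x: "x \<in> closure X" "x \<in> closure ?S"
    using assms dense_isCont_points closure_subset by blast+
  have "lower_rep X f y \<le> upper_rep X f y" if "y \<in> X" for y
    unfolding lower_rep_def upper_rep_def using that dense_isCont_points
    by (intro lsc_hull_le_usc_hull[OF _ bounded_isCont_points]) blast
  then have "usc_hull X (lower_rep X f) x \<le> usc_hull X (upper_rep X f) x"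
    by (intro usc_hull_mono[OF x(1) bounded_lower_rep bounded_upper_rep])
  also have "\<dots> = upper_rep X f x"
    by (rule usc_hull_eq_if_usc_on[OF usc_on_upper_rep assms bounded_upper_rep])
  finally show "usc_hull X (lower_rep X f) x \<le> upper_rep X f x" .
  have "upper_rep X f x = usc_hull ?S (lower_rep X f) x"
    unfolding upper_rep_def by (rule usc_hull_cong) (simp add: lower_rep_eq_at_isCont)
  also have "\<dots> \<le> usc_hull X (lower_rep X f) x"
    by (rule usc_hull_subset_mono[OF _ x(2) bounded_lower_rep]) auto
  finally show "upper_rep X f x \<le> usc_hull X (lower_rep X f) x" .
qed

lemma quasicontinuous_on_upper_rep: "quasicontinuous_on X (upper_rep X f)"
  using quasicontinuous_on_usc_hull[OF X lsc_on_lower_rep bounded_lower_rep]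
    quasicontinuous_on_cong[of X "usc_hull X (lower_rep X f)" "upper_rep X f"]
  by (simp add: usc_hull_lower_rep)

lemma upper_rep_unique:
  assumes h: "in_class X f h" and usc: "usc_on X h" and qc: "quasicontinuous_on X h"
    and x: "x \<in> X"
  shows "h x = upper_rep X f x"
proof -
  define Q where "Q = {x\<in>X. isCont f x \<and> h x = f x}"
  have "AE x in lebesgue_on X. isCont f x" and "AE x in lebesgue_on X. h x = f x"
    using f h by (simp_all add: C_ae_def in_class_def)
  then have "AE x in lebesgue_on X. isCont f x \<and> h x = f x" by eventually_elim simp
  then have dense: "X \<subseteq> closure Q" unfolding Q_def by (rule dense_if_AE_lebesgue_on[OF X])
  have "bounded (h ` X)" using h by (simp add: in_class_def)
  then have "h x = usc_hull Q h x"
    by (intro usc_quasicontinuous_eq_usc_hull[symmetric, OF X _ dense usc qc _ x]) (auto simp: Q_def)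
  also have "\<dots> = usc_hull Q f x" by (rule usc_hull_cong) (simp add: Q_def)
  also have "\<dots> = upper_rep X f x"
    unfolding upper_rep_def using dense x
    by (intro usc_hull_eq_on_dense_subset[symmetric, OF _ _ _ bounded_isCont_points])
      (auto simp: Q_def)
  finally show ?thesis .
qed

end

lemma lsc_hull_upper_rep:
  fixes X :: "'a::euclidean_space set"
  assumes "open X" and "C_ae X f" and "x \<in> X"
  shows "lsc_hull X (upper_rep X f) x = lower_rep X f x"
  using usc_hull_lower_rep[of X "\<lambda>y. - f y" x] assms
  by (simp add: C_ae_uminus_iff lower_rep_eq_neg_upper_rep lsc_hull_eq_neg_usc_hull)

lemma quasicontinuous_on_lower_rep:
  fixes X :: "'a::euclidean_space set"
  assumes "open X" and "C_ae X f"
  shows "quasicontinuous_on X (lower_rep X f)"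
  using quasicontinuous_on_upper_rep[of X "\<lambda>y. - f y"] assms
  by (simp add: C_ae_uminus_iff lower_rep_eq_neg_upper_rep quasicontinuous_on_neg_iff)

lemma lower_rep_unique:
  fixes X :: "'a::euclidean_space set"
  assumes "open X" and "C_ae X f"
    and "in_class X f h" and "lsc_on X h" and "quasicontinuous_on X h" and "x \<in> X"
  shows "h x = lower_rep X f x"
  using upper_rep_unique[of X "\<lambda>y. - f y" "\<lambda>y. - h y" x] assms
  by (simp add: C_ae_uminus_iff in_class_uminus_iff lsc_on_iff_usc_on_neg
      quasicontinuous_on_neg_iff lower_rep_eq_neg_upper_rep)

lemma usc_lsc_hull_pair_iff:
  fixes X :: "'a::euclidean_space set"
  assumes X: "open X" and f: "C_ae X f" and a: "in_class X f a" and b: "in_class X f b"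
  shows "(\<forall>x\<in>X. usc_hull X a x = b x \<and> lsc_hull X b x = a x) \<longleftrightarrow>
    (\<forall>x\<in>X. a x = lower_rep X f x \<and> b x = upper_rep X f x)"
proof
  assume H: "\<forall>x\<in>X. usc_hull X a x = b x \<and> lsc_hull X b x = a x"
  have bnd: "bounded (a ` X)" "bounded (b ` X)" using a b by (simp_all add: in_class_def)
  have "usc_on X b"
    using usc_on_usc_hull[OF closure_subset bnd(1)] usc_on_cong[of X "usc_hull X a" b] H by simp
  moreover have "lsc_on X a"
    using lsc_on_lsc_hull[OF closure_subset bnd(2)] lsc_on_cong[of X "lsc_hull X b" a] H by simp
  moreover have "quasicontinuous_on X b"
    using quasicontinuous_on_usc_hull[OF X \<open>lsc_on X a\<close> bnd(1)]
      quasicontinuous_on_cong[of X "usc_hull X a" b] H by simp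
  moreover have "quasicontinuous_on X a"
    using quasicontinuous_on_lsc_hull[OF X \<open>usc_on X b\<close> bnd(2)]
      quasicontinuous_on_cong[of X "lsc_hull X b" a] H by simp
  ultimately show "\<forall>x\<in>X. a x = lower_rep X f x \<and> b x = upper_rep X f x"
    using lower_rep_unique[OF X f a] upper_rep_unique[OF X f b] by blast
next
  assume H: "\<forall>x\<in>X. a x = lower_rep X f x \<and> b x = upper_rep X f x"
  have "usc_hull X a x = usc_hull X (lower_rep X f) x" "lsc_hull X b x = lsc_hull X (upper_rep X f) x" for x
    using H by (auto intro: usc_hull_cong lsc_hull_cong)
  then show "\<forall>x\<in>X. usc_hull X a x = b x \<and> lsc_hull X b x = a x"
    using H usc_hull_lower_rep[OF X f] lsc_hull_upper_rep[OF X f] by simp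
qed

lemma integral_upper_rep_eq_lower_rep:
  fixes X :: "'a::euclidean_space set"
  assumes X: "open X" and f: "C_ae X f"
  shows "integral\<^sup>L (lebesgue_on X) (upper_rep X f) = integral\<^sup>L (lebesgue_on X) (lower_rep X f)"
proof (rule integral_cong_AE)
  show "upper_rep X f \<in> borel_measurable (lebesgue_on X)"
    by (rule usc_on_borel_measurable[OF X usc_on_upper_rep[OF X f]])
  have "upper_rep X (\<lambda>y. - f y) \<in> borel_measurable (lebesgue_on X)"
    using f by (intro usc_on_borel_measurable[OF X] usc_on_upper_rep[OF X]) (simp add: C_ae_uminus_iff)
  then show "lower_rep X f \<in> borel_measurable (lebesgue_on X)"
    unfolding lower_rep_eq_neg_upper_rep by (rule borel_measurable_uminus)
  have "AE x in lebesgue_on X. upper_rep X f x = f x" "AE x in lebesgue_on X. lower_rep X f x = f x"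
    using in_class_upper_rep[OF X f] in_class_lower_rep[OF X f] by (simp_all add: in_class_def)
  then show "AE x in lebesgue_on X. upper_rep X f x = lower_rep X f x" by eventually_elim simp
qed

theorem proposition2p2:
  fixes X :: "'a::euclidean_space set" and f :: "'a \<Rightarrow> real"
  assumes "X \<noteq> {}" and "open X" and "bounded X"
    and "C_ae X f"
  shows "\<exists>fm fp.
     (in_class X f fm \<and> lsc_on X fm \<and> quasicontinuous_on X fm) \<and>
     (\<forall>h. in_class X f h \<and> lsc_on X h \<and> quasicontinuous_on X h \<longrightarrow> (\<forall>x\<in>X. h x = fm x)) \<and>
     (in_class X f fp \<and> usc_on X fp \<and> quasicontinuous_on X fp) \<and>
     (\<forall>h. in_class X f h \<and> usc_on X h \<and> quasicontinuous_on X h \<longrightarrow> (\<forall>x\<in>X. h x = fp x)) \<and>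
     (\<forall>a b. in_class X f a \<and> in_class X f b \<longrightarrow>
        ((\<forall>x\<in>X. usc_hull X a x = b x \<and> lsc_hull X b x = a x) \<longleftrightarrow>
         (\<forall>x\<in>X. a x = fm x \<and> b x = fp x))) \<and>
     integral\<^sup>L (lebesgue_on X) fp = integral\<^sup>L (lebesgue_on X) fm"
proof (rule exI[of _ "lower_rep X f"], rule exI[of _ "upper_rep X f"], intro conjI allI impI ballI)
  note X = \<open>open X\<close> and f = \<open>C_ae X f\<close>
  show "in_class X f (lower_rep X f)" "lsc_on X (lower_rep X f)"
    "quasicontinuous_on X (lower_rep X f)"
    by (rule in_class_lower_rep[OF X f] lsc_on_lower_rep[OF X f]
        quasicontinuous_on_lower_rep[OF X f])+
  show "in_class X f (upper_rep X f)" "usc_on X (upper_rep X f)"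
    "quasicontinuous_on X (upper_rep X f)"
    by (rule in_class_upper_rep[OF X f] usc_on_upper_rep[OF X f]
        quasicontinuous_on_upper_rep[OF X f])+
  show "h x = lower_rep X f x"
    if "in_class X f h \<and> lsc_on X h \<and> quasicontinuous_on X h" and "x \<in> X" for h x
    using lower_rep_unique[OF X f] that by blast
  show "h x = upper_rep X f x"
    if "in_class X f h \<and> usc_on X h \<and> quasicontinuous_on X h" and "x \<in> X" for h x
    using upper_rep_unique[OF X f] that by blast
  show "(\<forall>x\<in>X. usc_hull X a x = b x \<and> lsc_hull X b x = a x) \<longleftrightarrow>
      (\<forall>x\<in>X. a x = lower_rep X f x \<and> b x = upper_rep X f x)"
    if "in_class X f a \<and> in_class X f b" for a b
    using usc_lsc_hull_pair_iff[OF X f] that by blast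
  show "integral\<^sup>L (lebesgue_on X) (upper_rep X f) =
      integral\<^sup>L (lebesgue_on X) (lower_rep X f)"
    by (rule integral_upper_rep_eq_lower_rep[OF X f])
qed

end
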